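(* Consider the error system $\dot e(t)=Ae(t)+B\big(u_{\mathrm{adapt}}(t)+W^\top\beta(e(t))+\eta(t)\big)$ with the adaptive control $u_{\mathrm{adapt}}=-\hat W^\top\beta(e)$. Let Assumption 1 hold and let $0<P,Q\in\mathrm S^n$ satisfy $Q=-(A^\top P+PA)$. Let $\Gamma,\Sigma,K\in\mathrm S^{n_\beta}$ with $\Gamma>0$, $\Sigma>0$ and $0\le K<4\Sigma^{-1}$. Let the weights be computed by the PI update law $$\hat W(t)=K\beta(e(t))B^\top Pe(t)+\Gamma\int_0^t\Big(\beta(e(\theta))B^\top Pe(\theta)-\Sigma\hat W(\theta)\Big)\,\mathrm d\theta .$$ If the unstructured uncertainty is bounded, $|\eta(t)|\le\eta^\star<\infty$ for all $t\ge0$, then $e$ and $\hat W$ are uniformly ultimately bounded (UUB).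
   Context: Notation: $\mathrm S^k$ is the set of real symmetric $k\times k$ matrices; inequalities between symmetric matrices are in the Loewner (semidefinite) order; $\|\cdot\|$ is the Euclidean norm. Error system: $e(t)\in\mathbb R^n$, $A\in\mathbb R^{n\times n}$ is known and Hurwitz, $B\in\mathbb R^n$ is known, $\beta:\mathbb R^n\to\mathbb R^{n_\beta}$ is a known function, $W\in\mathbb R^{n_\beta}$ is an unknown constant vector, $\eta(t)\in\mathbb R$ is the unstructured uncertainty. Closed-loop solutions are assumed to exist on $[0,\infty)$. Assumption 1: there exists a non-decreasing function $\alpha_\beta:[0,\infty)\to[0,\infty)$ with $\|\beta(x)\|\le\alpha_\beta(\|x\|)$ for all $x\in\mathbb R^n$. UUB: a solution $x(t)$ (with $x(t_0)=x_0$, $t_0\ge0$) is uniformly ultimately bounded with ultimate bound $b$ if there is $b>0$ independent of $t_0$ such that for every $a>0$ there exists $T=T(a,b)\ge0$, independent of $t_0$, with $\|x(t_0)\|\le a\Rightarrow\|x(t)\|\le b$ for all $t\ge t_0+T$. *)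

theory Defs
  imports "HOL-Analysis.Analysis"
begin

definition sym_mat :: "real^'k^'k \<Rightarrow> bool" where
  "sym_mat M \<longleftrightarrow> transpose M = M"

definition pos_def :: "real^'k^'k \<Rightarrow> bool" where
  "pos_def M \<longleftrightarrow> sym_mat M \<and> (\<forall>x. x \<noteq> 0 \<longrightarrow> x \<bullet> (M *v x) > 0)"

definition pos_semidef :: "real^'k^'k \<Rightarrow> bool" where
  "pos_semidef M \<longleftrightarrow> sym_mat M \<and> (\<forall>x. x \<bullet> (M *v x) \<ge> 0)"

definition hurwitz :: "real^'n^'n \<Rightarrow> bool" where
  "hurwitz A \<longleftrightarrow>
     (\<forall>z::complex. det (mat z - (\<chi> i j. complex_of_real (A $ i $ j))) = 0 \<longrightarrow> Re z < 0)"

definition assumption1 :: "(real^'n \<Rightarrow> real^'m) \<Rightarrow> bool" where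
  "assumption1 \<beta> \<longleftrightarrow> (\<exists>\<alpha>::real \<Rightarrow> real. mono_on {0..} \<alpha> \<and> (\<forall>r\<ge>0. \<alpha> r \<ge> 0) \<and>
      (\<forall>x. norm (\<beta> x) \<le> \<alpha> (norm x)))"

text \<open>Closed-loop solution on [0,\<infinity>): error dynamics with
  u_adapt = - What^T beta(e) and the PI update law for What.
  Here beta(e) B^T P e is written (B \<bullet> (P *v e)) *R beta e.\<close>
definition closed_loop ::
  "real^'n^'n \<Rightarrow> real^'n \<Rightarrow> (real^'n \<Rightarrow> real^'m) \<Rightarrow> real^'m \<Rightarrow> (real \<Rightarrow> real)
   \<Rightarrow> real^'n^'n \<Rightarrow> real^'m^'m \<Rightarrow> real^'m^'m \<Rightarrow> real^'m^'m
   \<Rightarrow> (real \<Rightarrow> real^'n) \<Rightarrow> (real \<Rightarrow> real^'m) \<Rightarrow> bool" where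
  "closed_loop A B \<beta> W \<eta> P \<Gamma> \<Sigma> K e What \<longleftrightarrow>
     (\<forall>t\<ge>0. (e has_vector_derivative
        (A *v e t + ((- (What t \<bullet> \<beta> (e t))) + W \<bullet> \<beta> (e t) + \<eta> t) *\<^sub>R B))
        (at t within {0..})) \<and>
     (\<forall>t\<ge>0. \<exists>I. ((\<lambda>\<theta>. (B \<bullet> (P *v e \<theta>)) *\<^sub>R \<beta> (e \<theta>) - \<Sigma> *v What \<theta>) has_integral I) {0..t} \<and>
        What t = (B \<bullet> (P *v e t)) *\<^sub>R (K *v \<beta> (e t)) + \<Gamma> *v I)"

end

theory Submission
  imports Defs
begin

text \<open>With \<open>I\<close> the state of the integrator in the update law, so that
  \<open>What = K \<beta> B\<^sup>T P e + \<Gamma> I\<close>, and \<open>I\<^sub>* = \<Gamma>\<inverse> W\<close>, the function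
  \<open>V = e\<^sup>T P e + (I - I\<^sub>*)\<^sup>T \<Gamma> (I - I\<^sub>*)\<close> satisfies \<open>V' \<le> -c V + C\<close>. The terms of \<open>V'\<close> that are
  quadratic in the unknowns are \<open>-e\<^sup>T Q e\<close> and \<open>-2 (u\<^sup>T \<Sigma> u + u\<^sup>T \<Sigma> K \<phi> + \<phi>\<^sup>T K \<phi>)\<close> with
  \<open>u = \<Gamma> (I - I\<^sub>*)\<close>, \<open>\<phi> = \<beta> B\<^sup>T P e\<close>; the gain condition \<open>K < 4 \<Sigma>\<inverse>\<close> makes the latter
  dominate \<open>u\<^sup>T \<Sigma> u\<close>, while the bounded disturbance and the \<open>\<sigma>\<close>-term \<open>-\<Sigma> W\<close> only contribute
  linear terms. Hence every solution enters the sublevel set \<open>V \<le> M\<close>, \<open>M = (C + 1) / c\<close>,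
  after a time bounded by the initial value of \<open>V\<close> and stays there, and on that set \<open>e\<close> and
  \<open>What\<close> are bounded. Since \<open>I\<close> is only an indefinite integral of a possibly discontinuous
  integrand, the chain rule for \<open>V\<close> is proved in integrated form.\<close>

section \<open>Quadratic forms\<close>

lemma sym_mat_inner_mult_commute: "sym_mat M \<Longrightarrow> x \<bullet> (M *v y) = (M *v x) \<bullet> y"
  by (metis dot_lmul_matrix transpose_matrix_vector sym_mat_def)

lemma quadratic_form_scaleR:
  "(c *\<^sub>R x) \<bullet> (M *v (c *\<^sub>R x)) = c\<^sup>2 * (x \<bullet> (M *v x))" for M :: "real^'k^'k"
  by (simp add: matrix_vector_mult_scaleR power2_eq_square)

lemma quadratic_form_add:
  fixes M :: "real^'k^'k"
  assumes "sym_mat M"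
  shows "(a + b) \<bullet> (M *v (a + b)) = a \<bullet> (M *v a) + 2 * (a \<bullet> (M *v b)) + b \<bullet> (M *v b)"
  using sym_mat_inner_mult_commute[OF assms, of b a]
  by (simp add: matrix_vector_right_distrib inner_add_left inner_add_right inner_commute)

lemma matrix_vector_mult_norm_le: "\<exists>C>0. \<forall>x. norm (M *v x) \<le> C * norm x"
  for M :: "real^'k^'j"
  using bounded_linear.pos_bounded[OF matrix_vector_mul_bounded_linear[of M]]
  by (auto simp: mult.commute)

lemma mult_le_square_plus:
  fixes c x k :: real
  assumes "k > 0"
  shows "c * x \<le> k * x\<^sup>2 + c\<^sup>2 / (4 * k)"
proof -
  have "0 \<le> (2 * k * x - c)\<^sup>2 / (4 * k)" using assms by simp
  also have "\<dots> = k * x\<^sup>2 + c\<^sup>2 / (4 * k) - c * x"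
    using assms by (simp add: field_simps power2_eq_square)
  finally show ?thesis by simp
qed

lemma inner_matrix_vector_le:
  assumes "\<And>x. norm (G *v x) \<le> Gn * norm x"
  shows "\<bar>(G *v x) \<bullet> y\<bar> \<le> Gn * norm x * norm y"
  using Cauchy_Schwarz_ineq2[of "G *v x" y] mult_right_mono[OF assms[of x] norm_ge_zero[of y]] by linarith

lemma quadratic_form_le_norm: "\<exists>C>0. \<forall>x. x \<bullet> (M *v x) \<le> C * (norm x)\<^sup>2"
  for M :: "real^'k^'k"
proof -
  obtain C where C: "C > 0" "\<And>x. norm (M *v x) \<le> C * norm x"
    using matrix_vector_mult_norm_le by blast
  have "x \<bullet> (M *v x) \<le> C * (norm x)\<^sup>2" for x
  proof -
    have "x \<bullet> (M *v x) \<le> norm x * norm (M *v x)" by (rule norm_cauchy_schwarz)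
    also have "\<dots> \<le> norm x * (C * norm x)" using C by (simp add: mult_left_mono)
    finally show ?thesis by (simp add: power2_eq_square mult_ac)
  qed
  with C show ?thesis by blast
qed

lemma pos_def_quadratic_form_nonneg: "pos_def M \<Longrightarrow> x \<bullet> (M *v x) \<ge> 0"
  unfolding pos_def_def by (cases "x = 0") (auto intro: less_imp_le)

text \<open>Positivity on the compact unit sphere gives a uniform lower bound there.\<close>
lemma pos_def_quadratic_form_ge:
  fixes M :: "real^'k^'k"
  assumes "pos_def M"
  shows "\<exists>c>0. \<forall>x. c * (norm x)\<^sup>2 \<le> x \<bullet> (M *v x)"
proof -
  have cont: "continuous_on (sphere 0 1) (\<lambda>x::real^'k. x \<bullet> (M *v x))"
    by (intro continuous_intros linear_continuous_on matrix_vector_mul_bounded_linear)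
  have "sphere (0::real^'k) 1 \<noteq> {}"
    using vector_choose_size[of 1, where 'a="real^'k"] by auto
  then obtain x0 where x0: "x0 \<in> sphere 0 1" "\<And>y. y \<in> sphere 0 1 \<Longrightarrow> x0 \<bullet> (M *v x0) \<le> y \<bullet> (M *v y)"
    using continuous_attains_inf[OF compact_sphere _ cont] by blast
  have "x0 \<noteq> 0" using x0(1) by auto
  then have c0: "x0 \<bullet> (M *v x0) > 0"
    using assms unfolding pos_def_def by blast
  have "x0 \<bullet> (M *v x0) * (norm x)\<^sup>2 \<le> x \<bullet> (M *v x)" for x
  proof (cases "x = 0")
    case False
    define y where "y = (1 / norm x) *\<^sub>R x"
    have "x0 \<bullet> (M *v x0) \<le> y \<bullet> (M *v y)" using False by (intro x0(2)) (simp add: y_def)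
    moreover have "x \<bullet> (M *v x) = (norm x)\<^sup>2 * (y \<bullet> (M *v y))"
      using quadratic_form_scaleR[of "norm x" y M] False by (simp add: y_def)
    ultimately show ?thesis by (simp add: mult_right_mono mult.commute)
  qed simp
  with c0 show ?thesis by blast
qed

lemma quadratic_form_le_norm_image:
  fixes M :: "real^'k^'k"
  assumes "c > 0" and lower: "\<And>x. c * (norm x)\<^sup>2 \<le> x \<bullet> (M *v x)"
  shows "x \<bullet> (M *v x) \<le> (norm (M *v x))\<^sup>2 / c"
proof -
  have cs: "x \<bullet> (M *v x) \<le> norm x * norm (M *v x)" by (rule norm_cauchy_schwarz)
  have "c * norm x \<le> norm (M *v x)"
  proof (cases "x = 0")
    case False
    have "norm x * (c * norm x) \<le> norm x * norm (M *v x)"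
      using lower[of x] cs by (simp add: power2_eq_square mult_ac)
    then show ?thesis using False by (simp add: mult_le_cancel_left_pos)
  qed simp
  then have "norm x * norm (M *v x) \<le> (norm (M *v x) / c) * norm (M *v x)"
    using \<open>c > 0\<close> by (intro mult_right_mono) (auto simp: field_simps)
  with cs show ?thesis by (simp add: power2_eq_square)
qed

lemma pos_def_matrix_inv:
  fixes M :: "real^'k^'k"
  assumes "pos_def M"
  shows "M ** matrix_inv M = mat 1" "matrix_inv M ** M = mat 1"
proof -
  have "\<forall>x. M *v x = 0 \<longrightarrow> x = 0"
    using assms unfolding pos_def_def by (metis inner_zero_right less_irrefl)
  then have "invertible M" by (simp add: invertible_left_inverse matrix_left_invertible_ker)
  then have "\<exists>M'. M ** M' = mat 1 \<and> M' ** M = mat 1" by (simp add: invertible_def)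
  from someI_ex[OF this] show "M ** matrix_inv M = mat 1" "matrix_inv M ** M = mat 1"
    by (simp_all add: matrix_inv_def)
qed

lemma pos_semidef_Cauchy_Schwarz:
  fixes K :: "real^'k^'k"
  assumes "pos_semidef K"
  shows "(a \<bullet> (K *v b))\<^sup>2 \<le> (a \<bullet> (K *v a)) * (b \<bullet> (K *v b))"
proof -
  have psd: "\<And>x. x \<bullet> (K *v x) \<ge> 0" using assms unfolding pos_semidef_def by auto
  define X where "X = a \<bullet> (K *v b)"
  have q: "0 \<le> a \<bullet> (K *v a) + 2 * t * X + t\<^sup>2 * (b \<bullet> (K *v b))" for t
    using psd[of "a + t *\<^sub>R b"] assms
    by (simp add: quadratic_form_add quadratic_form_scaleR pos_semidef_def X_def
        matrix_vector_mult_scaleR power2_eq_square mult_ac)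
  show ?thesis
  proof (cases "b \<bullet> (K *v b) = 0")
    case True
    have "X = 0"
    proof (rule ccontr)
      assume "X \<noteq> 0"
      then have "a \<bullet> (K *v a) + 2 * (-(a \<bullet> (K *v a) + 1) / (2 * X)) * X = -1"
        by (simp add: field_simps)
      with q[of "-(a \<bullet> (K *v a) + 1) / (2 * X)"] True show False by simp
    qed
    with True show ?thesis by (simp add: X_def)
  next
    case False
    then have pos: "b \<bullet> (K *v b) > 0" using psd[of b] by simp
    have "0 \<le> a \<bullet> (K *v a) - X\<^sup>2 / (b \<bullet> (K *v b))"
      using q[of "- X / (b \<bullet> (K *v b))"] pos by (simp add: field_simps power2_eq_square)
    with pos show ?thesis by (simp add: field_simps X_def)
  qed
qed

lemma pos_def_matrix_inv_quadratic_form_nonneg: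
  fixes M :: "real^'k^'k"
  assumes "pos_def M"
  shows "a \<bullet> (matrix_inv M *v a) \<ge> 0"
proof -
  have "M *v (matrix_inv M *v a) = a"
    using pos_def_matrix_inv(1)[OF assms] by (simp add: matrix_vector_mul_assoc)
  then have eq: "a \<bullet> (matrix_inv M *v a) = (matrix_inv M *v a) \<bullet> (M *v (matrix_inv M *v a))"
    by (simp add: inner_commute)
  show ?thesis unfolding eq by (rule pos_def_quadratic_form_nonneg[OF assms])
qed

lemma pos_def_diff_margin:
  fixes S K :: "real^'k^'k"
  assumes "pos_def (r *\<^sub>R S - K)" and "r > 0" and S: "\<And>a. a \<bullet> (S *v a) \<ge> 0"
  shows "\<exists>c. 0 < c \<and> c < r \<and> (\<forall>a. a \<bullet> (K *v a) \<le> c * (a \<bullet> (S *v a)))"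
proof -
  obtain \<epsilon> where \<epsilon>: "\<epsilon> > 0" "\<And>a. \<epsilon> * (norm a)\<^sup>2 \<le> a \<bullet> ((r *\<^sub>R S - K) *v a)"
    using pos_def_quadratic_form_ge[OF assms(1)] by blast
  obtain L where L: "L > 0" "\<And>a. a \<bullet> (S *v a) \<le> L * (norm a)\<^sup>2"
    using quadratic_form_le_norm by blast
  define d where "d = min (\<epsilon> / L) (r / 2)"
  have d: "0 < d" "d < r" using \<epsilon> L \<open>r > 0\<close> by (auto simp: d_def)
  have "a \<bullet> (K *v a) \<le> (r - d) * (a \<bullet> (S *v a))" for a
  proof -
    have "d * (a \<bullet> (S *v a)) \<le> (\<epsilon> / L) * (L * (norm a)\<^sup>2)"
      using S[of a] L \<epsilon> by (intro mult_mono) (auto simp: d_def)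
    also have "\<dots> = \<epsilon> * (norm a)\<^sup>2" using L by simp
    also have "\<dots> \<le> r * (a \<bullet> (S *v a)) - a \<bullet> (K *v a)"
      using \<epsilon>(2)[of a] by (simp add: matrix_vector_mult_diff_rdistrib
          scaleR_matrix_vector_assoc[symmetric] inner_diff_right)
    finally show ?thesis by (simp add: algebra_simps)
  qed
  with d show ?thesis by (intro exI[of _ "r - d"]) auto
qed

lemma pos_semidef_sandwich_le:
  fixes \<Sigma> K :: "real^'k^'k"
  assumes \<Sigma>: "pos_def \<Sigma>" and K: "pos_semidef K" and "c \<ge> 0"
    and le: "\<And>a. a \<bullet> (K *v a) \<le> c * (a \<bullet> (matrix_inv \<Sigma> *v a))"
  shows "(K *v \<phi>) \<bullet> (\<Sigma> *v (K *v \<phi>)) \<le> c * (\<phi> \<bullet> (K *v \<phi>))"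
proof -
  define a where "a = \<Sigma> *v (K *v \<phi>)"
  define Y where "Y = (K *v \<phi>) \<bullet> a"
  have K0: "\<phi> \<bullet> (K *v \<phi>) \<ge> 0" using K by (simp add: pos_semidef_def)
  have "matrix_inv \<Sigma> *v a = K *v \<phi>"
    using pos_def_matrix_inv(2)[OF \<Sigma>] by (simp add: a_def matrix_vector_mul_assoc[of "matrix_inv \<Sigma>"])
  then have aSa: "a \<bullet> (matrix_inv \<Sigma> *v a) = Y" by (simp add: Y_def inner_commute)
  have Y0: "Y \<ge> 0" using pos_def_matrix_inv_quadratic_form_nonneg[OF \<Sigma>, of a] aSa by simp
  have "Y\<^sup>2 \<le> (a \<bullet> (K *v a)) * (\<phi> \<bullet> (K *v \<phi>))"
    using pos_semidef_Cauchy_Schwarz[OF K, of a \<phi>] by (simp add: Y_def inner_commute)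
  also have "\<dots> \<le> (c * Y) * (\<phi> \<bullet> (K *v \<phi>))"
    using le[of a] aSa K0 by (intro mult_right_mono) auto
  finally have "Y * Y \<le> Y * (c * (\<phi> \<bullet> (K *v \<phi>)))" by (simp add: power2_eq_square mult_ac)
  then have "Y \<le> c * (\<phi> \<bullet> (K *v \<phi>))"
    using Y0 K0 \<open>c \<ge> 0\<close> by (cases "Y = 0") (auto simp: mult_le_cancel_left)
  then show ?thesis by (simp add: Y_def a_def)
qed

text \<open>This is where the gain condition \<open>K < 4 \<Sigma>\<inverse>\<close> enters: the cross term
  \<open>u\<^sup>T \<Sigma> K \<phi>\<close> created by the proportional part of the update law is dominated.\<close>
lemma gain_condition_coercive:
  fixes \<Sigma> K :: "real^'m^'m"
  assumes \<Sigma>: "pos_def \<Sigma>" and K: "pos_semidef K" and gain: "pos_def (4 *\<^sub>R matrix_inv \<Sigma> - K)"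
  shows "\<exists>\<delta>>0. \<forall>u \<phi>. \<delta> * (u \<bullet> (\<Sigma> *v u))
                   \<le> u \<bullet> (\<Sigma> *v u) + u \<bullet> (\<Sigma> *v (K *v \<phi>)) + \<phi> \<bullet> (K *v \<phi>)"
proof -
  obtain c where c: "0 < c" "c < 4" and Kc: "\<And>a. a \<bullet> (K *v a) \<le> c * (a \<bullet> (matrix_inv \<Sigma> *v a))"
    using pos_def_diff_margin[OF gain _ pos_def_matrix_inv_quadratic_form_nonneg[OF \<Sigma>]] by auto
  have sym\<Sigma>: "sym_mat \<Sigma>" using \<Sigma> by (simp add: pos_def_def)
  have "(4 - c) / 4 * (u \<bullet> (\<Sigma> *v u)) \<le> u \<bullet> (\<Sigma> *v u) + u \<bullet> (\<Sigma> *v (K *v \<phi>)) + \<phi> \<bullet> (K *v \<phi>)"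
    for u \<phi>
  proof -
    define y where "y = K *v \<phi>"
    have KSK: "y \<bullet> (\<Sigma> *v y) \<le> c * (\<phi> \<bullet> (K *v \<phi>))"
      unfolding y_def using pos_semidef_sandwich_le[OF \<Sigma> K _ Kc] c by simp
    have "0 \<le> (c *\<^sub>R u + 2 *\<^sub>R y) \<bullet> (\<Sigma> *v (c *\<^sub>R u + 2 *\<^sub>R y))" by (rule pos_def_quadratic_form_nonneg[OF \<Sigma>])
    also have "\<dots> = c\<^sup>2 * (u \<bullet> (\<Sigma> *v u)) + 4 * c * (u \<bullet> (\<Sigma> *v y)) + 4 * (y \<bullet> (\<Sigma> *v y))"
      using sym_mat_inner_mult_commute[OF sym\<Sigma>, of y u]
      by (simp add: inner_commute quadratic_form_add[OF sym\<Sigma>] quadratic_form_scaleR matrix_vector_mult_scaleR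
          power2_eq_square algebra_simps)
    finally have "0 \<le> c * (c * (u \<bullet> (\<Sigma> *v u)) + 4 * (u \<bullet> (\<Sigma> *v y)) + 4 * (\<phi> \<bullet> (K *v \<phi>)))"
      using KSK by (simp add: power2_eq_square algebra_simps)
    then have "0 \<le> c * (u \<bullet> (\<Sigma> *v u)) + 4 * (u \<bullet> (\<Sigma> *v y)) + 4 * (\<phi> \<bullet> (K *v \<phi>))"
      using c by (simp add: zero_le_mult_iff)
    then show ?thesis by (simp add: y_def algebra_simps)
  qed
  with c show ?thesis by (intro exI[of _ "(4 - c) / 4"]) auto
qed

section \<open>Quadratic forms along indefinite integrals\<close>

lemma has_derivative_zero_of_quadratic_bound:
  fixes E :: "real \<Rightarrow> real"
  assumes bound: "\<And>x y. x \<in> S \<Longrightarrow> y \<in> S \<Longrightarrow> \<bar>E y - E x\<bar> \<le> C * (y - x)\<^sup>2" and "x \<in> S"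
  shows "(E has_derivative (\<lambda>h. 0)) (at x within S)"
  unfolding has_derivative_within
proof (intro conjI)
  show "bounded_linear (\<lambda>h::real. 0::real)" by simp
  show "((\<lambda>y. (1 / norm (y - x)) *\<^sub>R (E y - (E x + 0))) \<longlongrightarrow> 0) (at x within S)"
  proof (rule Lim_null_comparison[where g="\<lambda>y. \<bar>C\<bar> * \<bar>y - x\<bar>"])
    have "norm ((1 / norm (y - x)) *\<^sub>R (E y - (E x + 0))) \<le> \<bar>C\<bar> * \<bar>y - x\<bar>"
      if "y \<noteq> x" "y \<in> S" for y
    proof -
      have "\<bar>E y - E x\<bar> \<le> (\<bar>C\<bar> * \<bar>y - x\<bar>) * \<bar>y - x\<bar>"
      proof -
        have "\<bar>E y - E x\<bar> \<le> \<bar>C\<bar> * (y - x)\<^sup>2"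
          using bound[OF \<open>x \<in> S\<close> \<open>y \<in> S\<close>] abs_ge_self[of C]
          by (meson mult_right_mono order_trans zero_le_power2)
        then show ?thesis by (simp add: power2_eq_square)
      qed
      with that show ?thesis by (simp add: divide_le_eq)
    qed
    then show "\<forall>\<^sub>F y in at x within S. norm ((1 / norm (y - x)) *\<^sub>R (E y - (E x + 0))) \<le> \<bar>C\<bar> * \<bar>y - x\<bar>"
      unfolding eventually_at_filter by (intro always_eventually) auto
    show "((\<lambda>y. \<bar>C\<bar> * \<bar>y - x\<bar>) \<longlongrightarrow> 0) (at x within S)"
      by (rule tendsto_eq_intros refl)+ simp
  qed
qed

lemma indefinite_integral_increment:
  fixes g J :: "real \<Rightarrow> 'a::euclidean_space"
  assumes int: "\<And>x. x \<in> {s..t} \<Longrightarrow> (g has_integral (J x - J s)) {s..x}"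
    and "s \<le> a" "a \<le> b" "b \<le> t"
  shows "(g has_integral (J b - J a)) {a..b}"
proof -
  have ib: "(g has_integral (J b - J s)) {s..b}" using assms(2-4) by (intro int) auto
  have ia: "(g has_integral (J a - J s)) {s..a}" using assms(2-4) by (intro int) auto
  have "integral {s..a} g + integral {a..b} g = integral {s..b} g"
    using Henstock_Kurzweil_Integration.integral_combine[OF assms(2,3)] ib by blast
  then have "integral {a..b} g = J b - J a"
    using integral_unique[OF ia] integral_unique[OF ib] by (simp add: algebra_simps)
  moreover have "g integrable_on {a..b}"
    using integrable_subinterval_real[of g s b] ib assms(2-4) by auto
  ultimately show ?thesis by (metis has_integral_integral)
qed

lemma has_integral_norm_le_real:
  fixes f :: "real \<Rightarrow> 'a::euclidean_space"
  assumes "(f has_integral i) {a..b}" and "a \<le> b" and "\<And>x. x \<in> {a..b} \<Longrightarrow> norm (f x) \<le> B"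
  shows "norm i \<le> B * (b - a)"
proof -
  have "B \<ge> 0" using assms(2) assms(3)[of a] by (meson atLeastAtMost_iff norm_ge_zero order_refl order_trans)
  then show ?thesis using has_integral_bound[of B f i a b] assms by auto
qed

lemma integrable_inner_continuous_bounded:
  fixes f g :: "real \<Rightarrow> 'a::euclidean_space"
  assumes "continuous_on {a..b} f" "g integrable_on {a..b}" "\<And>x. x \<in> {a..b} \<Longrightarrow> norm (g x) \<le> L"
  shows "(\<lambda>x. f x \<bullet> g x) integrable_on {a..b}"
proof -
  have "g absolutely_integrable_on {a..b}"
    by (rule absolutely_integrable_integrable_bound[where g="\<lambda>_. L"]) (use assms in auto)
  then have "(\<lambda>x. f x \<bullet> g x) absolutely_integrable_on {a..b}"
    using assms(1)
    by (intro absolutely_integrable_bounded_measurable_product[where h="(\<bullet>)"]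
        continuous_imp_measurable_on_sets_lebesgue compact_imp_bounded compact_continuous_image)
       (auto simp: bilinear_conv_bounded_bilinear bounded_bilinear_inner)
  then show ?thesis using set_lebesgue_integral_eq_integral(1) by blast
qed

lemma quadratic_form_increment_second_order:
  fixes J g :: "real \<Rightarrow> real^'k" and G :: "real^'k^'k"
  assumes sym: "sym_mat G" and "Gn \<ge> 0" and G: "\<And>x. norm (G *v x) \<le> Gn * norm x"
    and "a \<le> b" and incr: "(g has_integral (J b - J a)) {a..b}"
    and lip: "\<And>\<theta>. \<theta> \<in> {a..b} \<Longrightarrow> norm (J \<theta> - J a) \<le> L * (b - a)"
    and g: "\<And>\<theta>. \<theta> \<in> {a..b} \<Longrightarrow> norm (g \<theta>) \<le> L"
    and H: "((\<lambda>\<theta>. 2 * ((G *v J \<theta>) \<bullet> g \<theta>)) has_integral H) {a..b}"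
  shows "\<bar>J b \<bullet> (G *v J b) - J a \<bullet> (G *v J a) - H\<bar> \<le> 3 * Gn * L\<^sup>2 * (b - a)\<^sup>2"
proof -
  define D where "D = J b - J a"
  have L: "L \<ge> 0" using g[of a] \<open>a \<le> b\<close> by (meson atLeastAtMost_iff norm_ge_zero order_refl order_trans)
  \<comment> \<open>freezing \<open>J\<close> at \<open>a\<close> in the integrand costs \<open>2 Gn L\<^sup>2 (b - a)\<close> pointwise\<close>
  have rem_int: "((\<lambda>\<theta>. 2 * ((G *v J \<theta>) \<bullet> g \<theta>) - 2 * ((G *v J a) \<bullet> g \<theta>))
          has_integral (H - 2 * ((G *v J a) \<bullet> D))) {a..b}"
    using has_integral_diff[OF H has_integral_mult_right[OF has_integral_linear[OF incr
          bounded_linear_inner_right[of "G *v J a"]]]]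
    by (simp add: o_def D_def)
  have rem_eq: "(\<lambda>\<theta>. 2 * ((G *v J \<theta>) \<bullet> g \<theta>) - 2 * ((G *v J a) \<bullet> g \<theta>))
      = (\<lambda>\<theta>. 2 * ((G *v (J \<theta> - J a)) \<bullet> g \<theta>))"
    by (simp add: matrix_vector_mult_diff_distrib inner_diff_left right_diff_distrib)
  have rem_bound: "norm (2 * ((G *v (J \<theta> - J a)) \<bullet> g \<theta>)) \<le> 2 * Gn * L\<^sup>2 * (b - a)"
    if "\<theta> \<in> {a..b}" for \<theta>
  proof -
    have "\<bar>(G *v (J \<theta> - J a)) \<bullet> g \<theta>\<bar> \<le> Gn * (L * (b - a)) * L"
      using inner_matrix_vector_le[OF G] lip[OF that] g[OF that] \<open>Gn \<ge> 0\<close> L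
      by (meson mult_mono mult_left_mono mult_nonneg_nonneg norm_ge_zero order_trans)
    then have "norm (2 * ((G *v (J \<theta> - J a)) \<bullet> g \<theta>)) \<le> 2 * (Gn * (L * (b - a)) * L)"
      by simp
    also have "\<dots> = 2 * Gn * L\<^sup>2 * (b - a)" by (simp add: power2_eq_square mult_ac)
    finally show ?thesis .
  qed
  have rest: "norm (H - 2 * ((G *v J a) \<bullet> D)) \<le> 2 * Gn * L\<^sup>2 * (b - a) * (b - a)"
    by (rule has_integral_norm_le_real[OF rem_int[unfolded rem_eq] \<open>a \<le> b\<close> rem_bound])
  have quad: "\<bar>D \<bullet> (G *v D)\<bar> \<le> Gn * L\<^sup>2 * (b - a)\<^sup>2"
  proof -
    have "\<bar>D \<bullet> (G *v D)\<bar> \<le> Gn * norm D * norm D"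
      using inner_matrix_vector_le[OF G, of D D] by (simp add: inner_commute)
    also have "\<dots> \<le> Gn * (L * (b - a)) * (L * (b - a))"
      using lip[of b] \<open>a \<le> b\<close> \<open>Gn \<ge> 0\<close> L unfolding D_def
      by (intro mult_mono mult_left_mono) auto
    finally show ?thesis by (simp add: power2_eq_square mult_ac)
  qed
  have "J b \<bullet> (G *v J b) - J a \<bullet> (G *v J a) = 2 * ((G *v J a) \<bullet> D) + D \<bullet> (G *v D)"
    using quadratic_form_add[OF sym, of "J a" D] sym_mat_inner_mult_commute[OF sym, of "J a" D]
    by (simp add: D_def)
  then have "\<bar>J b \<bullet> (G *v J b) - J a \<bullet> (G *v J a) - H\<bar> \<le> \<bar>H - 2 * ((G *v J a) \<bullet> D)\<bar> + \<bar>D \<bullet> (G *v D)\<bar>"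
    by linarith
  also have "\<dots> \<le> 2 * Gn * L\<^sup>2 * (b - a) * (b - a) + Gn * L\<^sup>2 * (b - a)\<^sup>2"
    using rest quad by simp
  finally show ?thesis by (simp add: power2_eq_square)
qed

lemma eq_of_increment_le_square:
  fixes E :: "real \<Rightarrow> real"
  assumes bound: "\<And>a b. s \<le> a \<Longrightarrow> a \<le> b \<Longrightarrow> b \<le> t \<Longrightarrow> \<bar>E b - E a\<bar> \<le> C * (b - a)\<^sup>2"
    and "x \<in> {s..t}"
  shows "E x = E s"
proof -
  have "\<bar>E b - E a\<bar> \<le> C * (b - a)\<^sup>2" if "a \<in> {s..t}" "b \<in> {s..t}" for a b
  proof (cases "a \<le> b")
    case False
    then have "\<bar>E a - E b\<bar> \<le> C * (a - b)\<^sup>2" using bound[of b a] that by simp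
    then show ?thesis by (simp add: abs_minus_commute power2_commute)
  qed (use bound that in simp)
  then have "\<exists>c. \<forall>x\<in>{s..t}. E x = c"
    by (intro has_derivative_zero_constant[OF convex_real_interval(5)] has_derivative_zero_of_quadratic_bound)
  then show ?thesis using assms(2) by auto
qed

lemma integrable_inner_indefinite_integral:
  fixes J g :: "real \<Rightarrow> real^'k" and G :: "real^'k^'k"
  assumes g: "\<And>x. x \<in> {s..t} \<Longrightarrow> norm (g x) \<le> L"
    and int: "\<And>x. x \<in> {s..t} \<Longrightarrow> (g has_integral (J x - J s)) {s..x}"
    and "s \<le> a" "a \<le> b" "b \<le> t"
  shows "(\<lambda>\<theta>. (G *v J \<theta>) \<bullet> g \<theta>) integrable_on {a..b}"
proof -
  have "continuous_on {s..t} (\<lambda>x. J s + integral {s..x} g)"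
    using has_integral_integrable[OF int[of t]] assms(3-5)
    by (intro continuous_intros indefinite_integral_continuous_1) auto
  moreover have "J s + integral {s..x} g = J x" if "x \<in> {s..t}" for x
    using integral_unique[OF int[OF that]] by simp
  ultimately have "continuous_on {s..t} J" by (metis (no_types, lifting) continuous_on_cong)
  then have "continuous_on {a..b} (\<lambda>\<theta>. G *v J \<theta>)"
    by (rule continuous_on_compose2[OF linear_continuous_on[OF matrix_vector_mul_bounded_linear]
          continuous_on_subset]) (use assms(3-5) in auto)
  then show ?thesis
    by (rule integrable_inner_continuous_bounded[where L=L,
          OF _ has_integral_integrable[OF indefinite_integral_increment[OF int assms(3-5)]]])
       (use assms(3-5) g in auto)
qed

text \<open>The chain rule for \<open>J\<^sup>T G J\<close> with \<open>J\<close> only an indefinite integral of a bounded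
  integrand: the defect \<open>E\<close> below changes by \<open>O(h\<^sup>2)\<close> over intervals of length \<open>h\<close>,
  hence is constant.\<close>
lemma has_integral_quadratic_form_indefinite_integral:
  fixes J g :: "real \<Rightarrow> real^'k" and G :: "real^'k^'k"
  assumes "s \<le> t" and sym: "sym_mat G" and g: "\<And>x. x \<in> {s..t} \<Longrightarrow> norm (g x) \<le> L"
    and int: "\<And>x. x \<in> {s..t} \<Longrightarrow> (g has_integral (J x - J s)) {s..x}"
  shows "((\<lambda>\<theta>. 2 * ((G *v J \<theta>) \<bullet> g \<theta>)) has_integral (J t \<bullet> (G *v J t) - J s \<bullet> (G *v J s))) {s..t}"
proof -
  define h where "h = (\<lambda>\<theta>. 2 * ((G *v J \<theta>) \<bullet> g \<theta>))"
  define q where "q = (\<lambda>v. v \<bullet> (G *v v))"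
  obtain Gn where Gn: "Gn > 0" and G: "\<And>x. norm (G *v x) \<le> Gn * norm x"
    using matrix_vector_mult_norm_le by blast
  have incr: "(g has_integral (J b - J a)) {a..b}" if "s \<le> a" "a \<le> b" "b \<le> t" for a b
    using indefinite_integral_increment[OF int that] .
  have L: "L \<ge> 0" using g[of s] \<open>s \<le> t\<close> by (meson atLeastAtMost_iff norm_ge_zero order_refl order_trans)
  have h_int: "h integrable_on {a..b}" if "s \<le> a" "a \<le> b" "b \<le> t" for a b
    unfolding h_def using integrable_inner_indefinite_integral[OF g int that] by simp
  define E where "E = (\<lambda>x. q (J x) - q (J s) - integral {s..x} h)"
  have "\<bar>E b - E a\<bar> \<le> 3 * Gn * L\<^sup>2 * (b - a)\<^sup>2" if "s \<le> a" "a \<le> b" "b \<le> t" for a b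
  proof -
    have "integral {s..a} h + integral {a..b} h = integral {s..b} h"
      using Henstock_Kurzweil_Integration.integral_combine[OF that(1,2) h_int[of s b]] that by simp
    then have "E b - E a = q (J b) - q (J a) - integral {a..b} h"
      by (simp add: E_def algebra_simps)
    moreover have "\<bar>q (J b) - q (J a) - integral {a..b} h\<bar> \<le> 3 * Gn * L\<^sup>2 * (b - a)\<^sup>2"
      unfolding q_def
    proof (rule quadratic_form_increment_second_order[OF sym less_imp_le[OF Gn] G \<open>a \<le> b\<close> incr[OF that]])
      fix \<theta> assume \<theta>: "\<theta> \<in> {a..b}"
      then have "norm (J \<theta> - J a) \<le> L * (\<theta> - a)"
        using that by (intro has_integral_norm_le_real[OF incr] g) auto
      also have "\<dots> \<le> L * (b - a)" using \<theta> L by (intro mult_left_mono) auto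
      finally show "norm (J \<theta> - J a) \<le> L * (b - a)" .
      show "norm (g \<theta>) \<le> L" using \<theta> that by (intro g) auto
    next
      show "((\<lambda>\<theta>. 2 * ((G *v J \<theta>) \<bullet> g \<theta>)) has_integral integral {a..b} h) {a..b}"
        using h_int[OF that] unfolding h_def by blast
    qed
    ultimately show ?thesis by simp
  qed
  then have "E t = E s" using \<open>s \<le> t\<close> by (intro eq_of_increment_le_square) auto
  then have "integral {s..t} h = q (J t) - q (J s)" by (simp add: E_def)
  moreover have "(h has_integral integral {s..t} h) {s..t}"
    using h_int[of s t] \<open>s \<le> t\<close> by blast
  ultimately show ?thesis unfolding h_def q_def by simp
qed

lemma has_vector_derivative_quadratic_form:
  fixes e :: "real \<Rightarrow> real^'n" and P :: "real^'n^'n"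
  assumes "(e has_vector_derivative d) (at x within S)" and sym: "sym_mat P"
  shows "((\<lambda>\<theta>. e \<theta> \<bullet> (P *v e \<theta>)) has_vector_derivative 2 * ((P *v e x) \<bullet> d)) (at x within S)"
proof -
  have e: "(e has_derivative (\<lambda>h. h *\<^sub>R d)) (at x within S)"
    using assms(1) by (simp add: has_vector_derivative_def)
  have "((\<lambda>\<theta>. e \<theta> \<bullet> (P *v e \<theta>))
        has_derivative (\<lambda>h. e x \<bullet> (P *v (h *\<^sub>R d)) + (h *\<^sub>R d) \<bullet> (P *v e x))) (at x within S)"
    by (rule has_derivative_inner[OF e bounded_linear.has_derivative[OF matrix_vector_mul_bounded_linear e]])
  moreover have "(\<lambda>h. e x \<bullet> (P *v (h *\<^sub>R d)) + (h *\<^sub>R d) \<bullet> (P *v e x)) = (\<lambda>h. h *\<^sub>R (2 * ((P *v e x) \<bullet> d)))"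
    using sym_mat_inner_mult_commute[OF sym, of "e x" d]
    by (auto simp: matrix_vector_mult_scaleR inner_commute algebra_simps)
  ultimately show ?thesis unfolding has_vector_derivative_def by simp
qed

lemma continuous_on_quadratic_form:
  fixes f :: "real \<Rightarrow> real^'k" and M :: "real^'k^'k"
  assumes "continuous_on S f"
  shows "continuous_on S (\<lambda>x. f x \<bullet> (M *v f x))"
  using assms
  by (intro continuous_on_inner continuous_on_compose2[OF linear_continuous_on[OF matrix_vector_mul_bounded_linear]])
     auto

text \<open>While \<open>V \<ge> M\<close>, \<open>V\<close> decreases with slope at most \<open>-1\<close>; so it drops below \<open>M\<close> within
  time \<open>V t\<^sub>0\<close>, and it cannot climb back, since from the last time \<open>s\<close> with \<open>V s \<le> M\<close> on it
  would be decreasing.\<close>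
lemma integral_decrease_ultimately_le:
  fixes V D :: "real \<Rightarrow> real"
  assumes cont: "\<And>t. continuous_on {t0..t} V" and V0: "\<And>x. x \<ge> t0 \<Longrightarrow> V x \<ge> 0"
    and integ: "\<And>s t. t0 \<le> s \<Longrightarrow> s \<le> t \<Longrightarrow> (D has_integral (V t - V s)) {s..t}"
    and dec: "\<And>x. x \<ge> t0 \<Longrightarrow> V x \<ge> M \<Longrightarrow> D x \<le> -1"
    and "M > 0" and t: "t \<ge> t0 + V t0"
  shows "V t \<le> M"
proof (rule ccontr)
  assume "\<not> V t \<le> M"
  then have Vt: "V t > M" by simp
  have "t0 \<le> t" using t V0[of t0] by simp
  define S where "S = {x \<in> {t0..t}. V x \<le> M}"
  show False
  proof (cases "S = {}")
    case True
    then have "\<forall>x\<in>{t0..t}. D x \<le> -1" using dec unfolding S_def by fastforce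
    then have "V t - V t0 \<le> - (t - t0)"
      using has_integral_le[OF integ[OF order_refl \<open>t0 \<le> t\<close>] has_integral_const_real[of "-1" t0 t]]
        \<open>t0 \<le> t\<close> by simp
    with t Vt \<open>M > 0\<close> show False by linarith
  next
    case False
    have "closed S" unfolding S_def by (rule continuous_on_closed_Collect_le) (auto intro: cont)
    moreover have bdd: "bdd_above S" unfolding S_def by (rule bdd_aboveI[of _ t]) auto
    ultimately have "Sup S \<in> S" using False by (intro closed_contains_Sup)
    then have s: "t0 \<le> Sup S" "Sup S \<le> t" "V (Sup S) \<le> M" unfolding S_def by auto
    have above: "V x > M" if "Sup S < x" "x \<le> t" for x
      using cSup_upper[OF _ bdd, of x] that s unfolding S_def by force
    have "Sup S < t" using s Vt by (metis order.not_eq_order_implies_strict not_le)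
    define D' where "D' = (\<lambda>x. if x = Sup S then -1 else D x)"
    have "(D' has_integral (V t - V (Sup S))) {Sup S..t}"
      by (rule has_integral_spike_finite[of "{Sup S}", OF _ _ integ[OF s(1,2)]]) (auto simp: D'_def)
    moreover have "\<forall>x\<in>{Sup S..t}. D' x \<le> -1" using above dec s by (auto simp: D'_def less_le)
    ultimately have "V t - V (Sup S) \<le> - (t - Sup S)"
      using has_integral_le[OF _ has_integral_const_real[of "-1" "Sup S" t]] \<open>Sup S < t\<close> by simp
    with s Vt \<open>Sup S < t\<close> show False by linarith
  qed
qed

section \<open>The closed loop\<close>

locale pi_adaptive_loop =
  fixes A P Q :: "real^'n^'n" and B :: "real^'n"
    and \<beta> :: "real^'n \<Rightarrow> real^'m" and W :: "real^'m"
    and \<eta> :: "real \<Rightarrow> real" and \<eta>star :: real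
    and \<Gamma> \<Sigma> K :: "real^'m^'m"
  assumes beta: "assumption1 \<beta>"
    and P: "pos_def P" and Q: "pos_def Q" and lyapunov_equation: "Q = - (transpose A ** P + P ** A)"
    and \<Gamma>: "pos_def \<Gamma>" and \<Sigma>: "pos_def \<Sigma>" and K: "pos_semidef K"
    and gain: "pos_def (4 *\<^sub>R matrix_inv \<Sigma> - K)"
    and eta: "\<And>t. t \<ge> 0 \<Longrightarrow> \<bar>\<eta> t\<bar> \<le> \<eta>star"
begin

definition error_field :: "real^'n \<Rightarrow> real^'m \<Rightarrow> real \<Rightarrow> real^'n" where
  "error_field e Wh \<eta>0 = A *v e + ((- (Wh \<bullet> \<beta> e)) + W \<bullet> \<beta> e + \<eta>0) *\<^sub>R B"

definition update_integrand :: "real^'n \<Rightarrow> real^'m \<Rightarrow> real^'m" where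
  "update_integrand e Wh = (B \<bullet> (P *v e)) *\<^sub>R \<beta> e - \<Sigma> *v Wh"

definition pi_weights :: "real^'n \<Rightarrow> real^'m \<Rightarrow> real^'m" where
  "pi_weights e I = (B \<bullet> (P *v e)) *\<^sub>R (K *v \<beta> e) + \<Gamma> *v I"

text \<open>The integrator state for which the integral part of the weights equals \<open>W\<close>.\<close>
definition I_star :: "real^'m" where
  "I_star = matrix_inv \<Gamma> *v W"

definition lyapunov :: "real^'n \<Rightarrow> real^'m \<Rightarrow> real" where
  "lyapunov e I = e \<bullet> (P *v e) + (I - I_star) \<bullet> (\<Gamma> *v (I - I_star))"

definition lyapunov_rate :: "real^'n \<Rightarrow> real^'m \<Rightarrow> real^'m \<Rightarrow> real \<Rightarrow> real" where
  "lyapunov_rate e Wh I \<eta>0 =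
     2 * ((P *v e) \<bullet> error_field e Wh \<eta>0) + 2 * ((\<Gamma> *v (I - I_star)) \<bullet> update_integrand e Wh)"

lemma closed_loop_iff:
  "closed_loop A B \<beta> W \<eta> P \<Gamma> \<Sigma> K e What \<longleftrightarrow>
     (\<forall>t\<ge>0. (e has_vector_derivative error_field (e t) (What t) (\<eta> t)) (at t within {0..})) \<and>
     (\<forall>t\<ge>0. \<exists>I. ((\<lambda>\<theta>. update_integrand (e \<theta>) (What \<theta>)) has_integral I) {0..t} \<and>
        What t = pi_weights (e t) I)"
  unfolding closed_loop_def error_field_def update_integrand_def pi_weights_def ..

lemma sym_P: "sym_mat P" and sym_\<Gamma>: "sym_mat \<Gamma>"
  using P \<Gamma> by (simp_all add: pos_def_def)

lemma \<Gamma>_I_star: "\<Gamma> *v I_star = W"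
  using pos_def_matrix_inv(1)[OF \<Gamma>] by (simp add: I_star_def matrix_vector_mul_assoc)

lemma lyapunov_nonneg: "lyapunov e I \<ge> 0"
  unfolding lyapunov_def
  using pos_def_quadratic_form_nonneg[OF P] pos_def_quadratic_form_nonneg[OF \<Gamma>] by (rule add_nonneg_nonneg)

lemma quadratic_form_Q: "x \<bullet> (Q *v x) = - 2 * ((P *v x) \<bullet> (A *v x))"
proof -
  have "(- M) *v x = - (M *v x)" for M :: "real^'n^'n"
    using matrix_vector_mult_diff_rdistrib[of 0 M x] by simp
  then have "Q *v x = - (transpose A *v (P *v x) + P *v (A *v x))"
    by (simp add: lyapunov_equation matrix_vector_mult_diff_rdistrib matrix_vector_mul_assoc)
  moreover have "x \<bullet> (transpose A *v (P *v x)) = (P *v x) \<bullet> (A *v x)"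
    by (metis dot_lmul_matrix inner_commute transpose_matrix_vector)
  moreover have "x \<bullet> (P *v (A *v x)) = (P *v x) \<bullet> (A *v x)"
    by (rule sym_mat_inner_mult_commute[OF sym_P])
  ultimately show ?thesis by (simp only: inner_minus_right inner_add_right)
qed

lemma lyapunov_rate_pi_weights:
  fixes e :: "real^'n" and I :: "real^'m" and \<eta>0 :: real
  defines "s \<equiv> B \<bullet> (P *v e)" and "u \<equiv> \<Gamma> *v (I - I_star)" and "\<phi> \<equiv> (B \<bullet> (P *v e)) *\<^sub>R \<beta> e"
  shows "lyapunov_rate e (pi_weights e I) I \<eta>0 =
           - (e \<bullet> (Q *v e)) + 2 * s * \<eta>0
           - 2 * (u \<bullet> (\<Sigma> *v u) + u \<bullet> (\<Sigma> *v (K *v \<phi>)) + \<phi> \<bullet> (K *v \<phi>)) - 2 * (u \<bullet> (\<Sigma> *v W))"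
proof -
  have weights: "pi_weights e I = K *v \<phi> + u + W"
    using \<Gamma>_I_star by (simp add: pi_weights_def u_def \<phi>_def s_def matrix_vector_mult_scaleR
        matrix_vector_mult_diff_distrib)
  have field: "2 * ((P *v e) \<bullet> error_field e Wh \<eta>0) = - (e \<bullet> (Q *v e)) - 2 * (Wh \<bullet> \<phi>) + 2 * (W \<bullet> \<phi>) + 2 * s * \<eta>0"
    for Wh
    by (simp add: error_field_def quadratic_form_Q inner_add_right \<phi>_def s_def inner_commute[of B]
        algebra_simps)
  have integrand: "2 * (u \<bullet> update_integrand e Wh) = 2 * (u \<bullet> \<phi>) - 2 * (u \<bullet> (\<Sigma> *v Wh))" for Wh
    by (simp add: update_integrand_def \<phi>_def s_def inner_diff_right)
  show ?thesis
    unfolding lyapunov_rate_def u_def[symmetric] field integrand weights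
    by (simp add: matrix_vector_right_distrib inner_add_left inner_add_right
        inner_commute[of "K *v \<phi>" \<phi>] algebra_simps)
qed

lemma lyapunov_rate_pi_weights_le:
  fixes e :: "real^'n" and I :: "real^'m"
  assumes \<eta>0: "\<bar>\<eta>0\<bar> \<le> \<eta>star" and q: "\<And>x. q * (norm x)\<^sup>2 \<le> x \<bullet> (Q *v x)"
    and \<sigma>: "\<And>x. \<sigma> * (norm x)\<^sup>2 \<le> x \<bullet> (\<Sigma> *v x)" and "\<delta> \<ge> 0"
    and \<delta>: "\<And>u \<phi>. \<delta> * (u \<bullet> (\<Sigma> *v u)) \<le> u \<bullet> (\<Sigma> *v u) + u \<bullet> (\<Sigma> *v (K *v \<phi>)) + \<phi> \<bullet> (K *v \<phi>)"
    and PN: "\<And>x. norm (P *v x) \<le> PN * norm x" and SN: "\<And>x. norm (\<Sigma> *v x) \<le> SN * norm x"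
  defines "u \<equiv> \<Gamma> *v (I - I_star)"
  shows "lyapunov_rate e (pi_weights e I) I \<eta>0
    \<le> - q * (norm e)\<^sup>2 + 2 * (norm B * PN * \<eta>star) * norm e
       - 2 * (\<delta> * \<sigma>) * (norm u)\<^sup>2 + 2 * (SN * norm W) * norm u"
proof -
  define \<phi> where "\<phi> = (B \<bullet> (P *v e)) *\<^sub>R \<beta> e"
  have "\<bar>B \<bullet> (P *v e)\<bar> \<le> norm B * (PN * norm e)"
    using order_trans[OF Cauchy_Schwarz_ineq2 mult_left_mono[OF PN norm_ge_zero]] .
  then have "\<bar>B \<bullet> (P *v e)\<bar> * \<bar>\<eta>0\<bar> \<le> (norm B * (PN * norm e)) * \<eta>star"
    using \<eta>0 by (intro mult_mono) auto
  moreover have "(B \<bullet> (P *v e)) * \<eta>0 \<le> \<bar>B \<bullet> (P *v e)\<bar> * \<bar>\<eta>0\<bar>"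
    by (metis abs_ge_self abs_mult)
  moreover have "(norm B * (PN * norm e)) * \<eta>star = norm B * PN * \<eta>star * norm e"
    by (simp add: mult_ac)
  ultimately have noise: "2 * (B \<bullet> (P *v e)) * \<eta>0 \<le> 2 * (norm B * PN * \<eta>star) * norm e"
    by linarith
  have coercive: "- 2 * (u \<bullet> (\<Sigma> *v u) + u \<bullet> (\<Sigma> *v (K *v \<phi>)) + \<phi> \<bullet> (K *v \<phi>))
      \<le> - 2 * (\<delta> * \<sigma>) * (norm u)\<^sup>2"
    using \<delta>[of u \<phi>] mult_left_mono[OF \<sigma>[of u] \<open>\<delta> \<ge> 0\<close>] by simp
  have "\<bar>u \<bullet> (\<Sigma> *v W)\<bar> \<le> norm u * (SN * norm W)"
    using order_trans[OF Cauchy_Schwarz_ineq2 mult_left_mono[OF SN norm_ge_zero]] .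
  moreover have "norm u * (SN * norm W) = SN * norm W * norm u" by (simp add: mult_ac)
  ultimately have drift: "- 2 * (u \<bullet> (\<Sigma> *v W)) \<le> 2 * (SN * norm W) * norm u"
    by linarith
  show ?thesis
    unfolding lyapunov_rate_pi_weights u_def[symmetric] \<phi>_def[symmetric]
    using q[of e] noise coercive drift by linarith
qed

text \<open>The quadratic decay from \<open>Q\<close> and from the coercivity of \<open>\<Sigma>\<close> absorbs the linear terms
  caused by \<open>\<eta>\<close> and by the \<open>\<sigma>\<close>-modification \<open>-\<Sigma> W\<close>, at the price of the constant \<open>C\<close>.\<close>
lemma lyapunov_rate_le:
  obtains c C where "c > 0"
    and "\<And>e I \<eta>0. \<bar>\<eta>0\<bar> \<le> \<eta>star \<Longrightarrow> lyapunov_rate e (pi_weights e I) I \<eta>0 \<le> - c * lyapunov e I + C"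
proof -
  obtain q where q: "q > 0" "\<And>x. q * (norm x)\<^sup>2 \<le> x \<bullet> (Q *v x)"
    using pos_def_quadratic_form_ge[OF Q] by blast
  obtain p where p: "p > 0" "\<And>x. x \<bullet> (P *v x) \<le> p * (norm x)\<^sup>2"
    using quadratic_form_le_norm by blast
  obtain g where g: "g > 0" "\<And>x. g * (norm x)\<^sup>2 \<le> x \<bullet> (\<Gamma> *v x)"
    using pos_def_quadratic_form_ge[OF \<Gamma>] by blast
  obtain \<sigma> where \<sigma>: "\<sigma> > 0" "\<And>x. \<sigma> * (norm x)\<^sup>2 \<le> x \<bullet> (\<Sigma> *v x)"
    using pos_def_quadratic_form_ge[OF \<Sigma>] by blast
  obtain \<delta> where \<delta>: "\<delta> > 0"
    "\<And>u \<phi>. \<delta> * (u \<bullet> (\<Sigma> *v u)) \<le> u \<bullet> (\<Sigma> *v u) + u \<bullet> (\<Sigma> *v (K *v \<phi>)) + \<phi> \<bullet> (K *v \<phi>)"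
    using gain_condition_coercive[OF \<Sigma> K gain] by blast
  obtain PN where PN: "\<And>x. norm (P *v x) \<le> PN * norm x" using matrix_vector_mult_norm_le by blast
  obtain SN where SN: "\<And>x. norm (\<Sigma> *v x) \<le> SN * norm x" using matrix_vector_mult_norm_le by blast
  define c where "c = min (q / (2 * p)) (\<delta> * \<sigma> * g)"
  define C where "C = (2 * (norm B * PN * \<eta>star))\<^sup>2 / (4 * (q / 2)) + (2 * (SN * norm W))\<^sup>2 / (4 * (\<delta> * \<sigma>))"
  have "c > 0" using q p \<delta> \<sigma> g by (simp add: c_def)
  moreover have "lyapunov_rate e (pi_weights e I) I \<eta>0 \<le> - c * lyapunov e I + C"
    if \<eta>0: "\<bar>\<eta>0\<bar> \<le> \<eta>star" for e I \<eta>0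
  proof -
    define u where "u = \<Gamma> *v (I - I_star)"
    have "lyapunov e I \<le> p * (norm e)\<^sup>2 + (norm u)\<^sup>2 / g"
      using p(2)[of e] quadratic_form_le_norm_image[OF g, of "I - I_star"]
      unfolding lyapunov_def u_def by linarith
    then have "c * lyapunov e I \<le> c * (p * (norm e)\<^sup>2 + (norm u)\<^sup>2 / g)"
      using \<open>c > 0\<close> by (simp add: mult_left_mono)
    also have "\<dots> = (c * p) * (norm e)\<^sup>2 + (c / g) * (norm u)\<^sup>2"
      by (simp add: algebra_simps)
    also have "\<dots> \<le> q / 2 * (norm e)\<^sup>2 + \<delta> * \<sigma> * (norm u)\<^sup>2"
    proof (intro add_mono mult_right_mono)
      have "c \<le> q / (2 * p)" by (simp add: c_def)
      then show "c * p \<le> q / 2" using p(1) by (simp add: pos_le_divide_eq)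
      have "c \<le> \<delta> * \<sigma> * g" by (simp add: c_def)
      then show "c / g \<le> \<delta> * \<sigma>" using g(1) by (simp add: pos_divide_le_eq)
    qed simp_all
    moreover have "2 * (norm B * PN * \<eta>star) * norm e
        \<le> q / 2 * (norm e)\<^sup>2 + (2 * (norm B * PN * \<eta>star))\<^sup>2 / (4 * (q / 2))"
      using q by (intro mult_le_square_plus) simp
    moreover have "2 * (SN * norm W) * norm u \<le> \<delta> * \<sigma> * (norm u)\<^sup>2 + (2 * (SN * norm W))\<^sup>2 / (4 * (\<delta> * \<sigma>))"
      using \<delta> \<sigma> by (intro mult_le_square_plus) simp
    ultimately show ?thesis
      using lyapunov_rate_pi_weights_le[where e=e and I=I, OF \<eta>0 q(2) \<sigma>(2) less_imp_le[OF \<delta>(1)] \<delta>(2) PN SN]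
        minus_mult_left[of c "lyapunov e I"]
      unfolding C_def u_def by linarith
  qed
  ultimately show ?thesis by (rule that)
qed

lemma proportional_term_bounded:
  obtains c where "\<And>e. norm e \<le> r \<Longrightarrow> norm ((B \<bullet> (P *v e)) *\<^sub>R \<beta> e) \<le> c"
proof -
  obtain \<alpha> where \<alpha>: "mono_on {0..} \<alpha>" "\<And>x. norm (\<beta> x) \<le> \<alpha> (norm x)"
    using beta unfolding assumption1_def by blast
  obtain PN where PN: "PN > 0" "\<And>x. norm (P *v x) \<le> PN * norm x" using matrix_vector_mult_norm_le by blast
  have "norm ((B \<bullet> (P *v e)) *\<^sub>R \<beta> e) \<le> (norm B * (PN * r)) * \<alpha> r" if e: "norm e \<le> r" for e
  proof -
    have "norm (P *v e) \<le> PN * r"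
      using PN(2)[of e] mult_left_mono[OF e less_imp_le[OF PN(1)]] by linarith
    then have "\<bar>B \<bullet> (P *v e)\<bar> \<le> norm B * (PN * r)"
      using Cauchy_Schwarz_ineq2[of B "P *v e"] mult_left_mono[of _ _ "norm B"] by force
    moreover have "norm (\<beta> e) \<le> \<alpha> r"
    proof -
      have "\<alpha> (norm e) \<le> \<alpha> r" by (rule mono_onD[OF \<alpha>(1)]) (use e order_trans[OF norm_ge_zero e] in auto)
      then show ?thesis using \<alpha>(2)[of e] by linarith
    qed
    moreover have "0 \<le> norm B * (PN * r)" using PN(1) order_trans[OF norm_ge_zero e] by simp
    ultimately show ?thesis by (simp add: mult_mono)
  qed
  then show ?thesis by (rule that)
qed

lemma pi_weights_proportional: "(B \<bullet> (P *v e)) *\<^sub>R (K *v \<beta> e) = K *v ((B \<bullet> (P *v e)) *\<^sub>R \<beta> e)"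
  by (simp add: matrix_vector_mult_scaleR)

lemma pi_weights_eq: "pi_weights e I = K *v ((B \<bullet> (P *v e)) *\<^sub>R \<beta> e) + \<Gamma> *v (I - I_star) + W"
  using \<Gamma>_I_star by (simp add: pi_weights_def pi_weights_proportional matrix_vector_mult_diff_distrib)

lemma pi_weights_bounded_on_sublevel:
  obtains b where "b > 0" and "\<And>e I. lyapunov e I \<le> M \<Longrightarrow> norm (e, pi_weights e I) \<le> b"
proof -
  obtain p where p: "p > 0" "\<And>x. p * (norm x)\<^sup>2 \<le> x \<bullet> (P *v x)"
    using pos_def_quadratic_form_ge[OF P] by blast
  obtain g where g: "g > 0" "\<And>x. g * (norm x)\<^sup>2 \<le> x \<bullet> (\<Gamma> *v x)"
    using pos_def_quadratic_form_ge[OF \<Gamma>] by blast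
  obtain KN where KN: "KN > 0" "\<And>x. norm (K *v x) \<le> KN * norm x" using matrix_vector_mult_norm_le by blast
  obtain GN where GN: "GN > 0" "\<And>x. norm (\<Gamma> *v x) \<le> GN * norm x" using matrix_vector_mult_norm_le by blast
  define R where "R = sqrt (M / p)"
  obtain c where c: "\<And>e. norm e \<le> R \<Longrightarrow> norm ((B \<bullet> (P *v e)) *\<^sub>R \<beta> e) \<le> c"
    using proportional_term_bounded by blast
  define b where "b = max 1 (R + KN * c + GN * sqrt (M / g) + norm W)"
  have "norm (e, pi_weights e I) \<le> b" if "lyapunov e I \<le> M" for e I
  proof -
    have "0 \<le> p * (norm e)\<^sup>2" "0 \<le> g * (norm (I - I_star))\<^sup>2" using p(1) g(1) by simp_all
    then have "p * (norm e)\<^sup>2 \<le> M" "g * (norm (I - I_star))\<^sup>2 \<le> M"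
      using p(2)[of e] g(2)[of "I - I_star"] that unfolding lyapunov_def by linarith+
    then have e: "norm e \<le> R" and I: "norm (I - I_star) \<le> sqrt (M / g)"
      unfolding R_def using p(1) g(1) by (auto intro!: real_le_rsqrt simp: field_simps)
    have "norm (\<Gamma> *v (I - I_star)) \<le> GN * sqrt (M / g)"
      using GN(2)[of "I - I_star"] mult_left_mono[OF I less_imp_le[OF GN(1)]] by linarith
    moreover have "norm (K *v ((B \<bullet> (P *v e)) *\<^sub>R \<beta> e)) \<le> KN * c"
      using KN(2) mult_left_mono[OF c[OF e] less_imp_le[OF KN(1)]] order_trans by blast
    ultimately have "norm (pi_weights e I) \<le> KN * c + GN * sqrt (M / g) + norm W"
      unfolding pi_weights_eq
      using norm_triangle_ineq[of "K *v ((B \<bullet> (P *v e)) *\<^sub>R \<beta> e) + \<Gamma> *v (I - I_star)" W]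
        norm_triangle_ineq[of "K *v ((B \<bullet> (P *v e)) *\<^sub>R \<beta> e)" "\<Gamma> *v (I - I_star)"] by linarith
    then show ?thesis
      using norm_Pair_le[of e "pi_weights e I"] e unfolding b_def by linarith
  qed
  moreover have "b > 0" by (simp add: b_def)
  ultimately show ?thesis using that by blast
qed

lemma lyapunov_bounded_on_ball:
  obtains T where "T \<ge> 0" and "\<And>e I. norm (e, pi_weights e I) \<le> a \<Longrightarrow> lyapunov e I \<le> T"
proof -
  obtain p where p: "p > 0" "\<And>x. x \<bullet> (P *v x) \<le> p * (norm x)\<^sup>2" using quadratic_form_le_norm by blast
  obtain g where g: "g > 0" "\<And>x. g * (norm x)\<^sup>2 \<le> x \<bullet> (\<Gamma> *v x)"
    using pos_def_quadratic_form_ge[OF \<Gamma>] by blast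
  obtain KN where KN: "KN > 0" "\<And>x. norm (K *v x) \<le> KN * norm x" using matrix_vector_mult_norm_le by blast
  obtain c where c: "\<And>e. norm e \<le> a \<Longrightarrow> norm ((B \<bullet> (P *v e)) *\<^sub>R \<beta> e) \<le> c"
    using proportional_term_bounded by blast
  define T where "T = max 0 (p * a\<^sup>2 + (a + KN * c + norm W)\<^sup>2 / g)"
  have "lyapunov e I \<le> T" if "norm (e, pi_weights e I) \<le> a" for e I
  proof -
    have e: "norm e \<le> a" and Wh: "norm (pi_weights e I) \<le> a"
      using that norm_fst_le[of e "pi_weights e I"] norm_snd_le[of "pi_weights e I" e] by linarith+
    have K: "norm (K *v ((B \<bullet> (P *v e)) *\<^sub>R \<beta> e)) \<le> KN * c"
      using KN(2) mult_left_mono[OF c[OF e] less_imp_le[OF KN(1)]] order_trans by blast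
    have "\<Gamma> *v (I - I_star) = pi_weights e I - (K *v ((B \<bullet> (P *v e)) *\<^sub>R \<beta> e) + W)"
      unfolding pi_weights_eq by simp
    then have "norm (\<Gamma> *v (I - I_star)) \<le> norm (pi_weights e I) + norm (K *v ((B \<bullet> (P *v e)) *\<^sub>R \<beta> e) + W)"
      by (simp only: norm_triangle_ineq4)
    then have u: "norm (\<Gamma> *v (I - I_star)) \<le> a + KN * c + norm W"
      using Wh K norm_triangle_ineq[of "K *v ((B \<bullet> (P *v e)) *\<^sub>R \<beta> e)" W] by linarith
    have "(norm e)\<^sup>2 \<le> a\<^sup>2" using e by (simp add: power_mono)
    then have "e \<bullet> (P *v e) \<le> p * a\<^sup>2"
      using p(2)[of e] mult_left_mono[of "(norm e)\<^sup>2" "a\<^sup>2" p] p(1) by linarith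
    moreover have "(norm (\<Gamma> *v (I - I_star)))\<^sup>2 \<le> (a + KN * c + norm W)\<^sup>2"
      using u by (simp add: power_mono)
    then have "(I - I_star) \<bullet> (\<Gamma> *v (I - I_star)) \<le> (a + KN * c + norm W)\<^sup>2 / g"
      using quadratic_form_le_norm_image[OF g, of "I - I_star"] divide_right_mono[of _ _ g] g(1)
      by force
    ultimately show ?thesis unfolding T_def lyapunov_def by linarith
  qed
  then show ?thesis using that[of T] by (simp add: T_def)
qed

lemma update_integrand_bounded:
  assumes "compact S" and "continuous_on S e" and "continuous_on S I"
  obtains L where "\<And>\<theta>. \<theta> \<in> S \<Longrightarrow> norm (update_integrand (e \<theta>) (pi_weights (e \<theta>) (I \<theta>))) \<le> L"
proof -
  obtain R where R: "\<And>\<theta>. \<theta> \<in> S \<Longrightarrow> norm (e \<theta>) \<le> R"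
    using compact_imp_bounded[OF compact_continuous_image[OF assms(2,1)]] by (auto simp: bounded_iff)
  obtain RI where RI: "\<And>\<theta>. \<theta> \<in> S \<Longrightarrow> norm (I \<theta>) \<le> RI"
    using compact_imp_bounded[OF compact_continuous_image[OF assms(3,1)]] by (auto simp: bounded_iff)
  obtain c where c: "\<And>x. norm x \<le> R \<Longrightarrow> norm ((B \<bullet> (P *v x)) *\<^sub>R \<beta> x) \<le> c"
    using proportional_term_bounded by blast
  obtain KN where KN: "KN > 0" "\<And>x. norm (K *v x) \<le> KN * norm x" using matrix_vector_mult_norm_le by blast
  obtain GN where GN: "GN > 0" "\<And>x. norm (\<Gamma> *v x) \<le> GN * norm x" using matrix_vector_mult_norm_le by blast
  obtain SN where SN: "SN > 0" "\<And>x. norm (\<Sigma> *v x) \<le> SN * norm x" using matrix_vector_mult_norm_le by blast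
  have "norm (update_integrand (e \<theta>) (pi_weights (e \<theta>) (I \<theta>))) \<le> c + SN * (KN * c + GN * RI)"
    if "\<theta> \<in> S" for \<theta>
  proof -
    define \<phi> where "\<phi> = (B \<bullet> (P *v e \<theta>)) *\<^sub>R \<beta> (e \<theta>)"
    have \<phi>: "norm \<phi> \<le> c" unfolding \<phi>_def using c R that by blast
    have "norm (K *v \<phi>) \<le> KN * c" using KN(2)[of \<phi>] mult_left_mono[OF \<phi> less_imp_le[OF KN(1)]] by linarith
    moreover have "norm (\<Gamma> *v I \<theta>) \<le> GN * RI"
      using GN(2)[of "I \<theta>"] mult_left_mono[OF RI[OF that] less_imp_le[OF GN(1)]] by linarith
    ultimately have "norm (pi_weights (e \<theta>) (I \<theta>)) \<le> KN * c + GN * RI"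
      using norm_triangle_ineq[of "K *v \<phi>" "\<Gamma> *v I \<theta>"]
      by (simp add: pi_weights_def pi_weights_proportional \<phi>_def)
    then have "norm (\<Sigma> *v pi_weights (e \<theta>) (I \<theta>)) \<le> SN * (KN * c + GN * RI)"
      using SN(2) mult_left_mono[of _ _ SN] SN(1) by (meson less_imp_le order_trans)
    then show ?thesis
      using \<phi> norm_triangle_ineq4[of \<phi> "\<Sigma> *v pi_weights (e \<theta>) (I \<theta>)"]
      by (simp add: update_integrand_def \<phi>_def)
  qed
  then show ?thesis by (rule that)
qed

definition integrator :: "(real \<Rightarrow> real^'n) \<Rightarrow> (real \<Rightarrow> real^'m) \<Rightarrow> real \<Rightarrow> real^'m" where
  "integrator e What t = integral {0..t} (\<lambda>\<theta>. update_integrand (e \<theta>) (What \<theta>))"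

context
  fixes e :: "real \<Rightarrow> real^'n" and What :: "real \<Rightarrow> real^'m"
  assumes solution: "closed_loop A B \<beta> W \<eta> P \<Gamma> \<Sigma> K e What"
begin

lemma closed_loop_has_vector_derivative:
  "t \<ge> 0 \<Longrightarrow> (e has_vector_derivative error_field (e t) (What t) (\<eta> t)) (at t within {0..})"
  using solution unfolding closed_loop_iff by blast

lemma closed_loop_integrator:
  assumes "t \<ge> 0"
  shows "((\<lambda>\<theta>. update_integrand (e \<theta>) (What \<theta>)) has_integral integrator e What t) {0..t}"
    and "What t = pi_weights (e t) (integrator e What t)"
proof -
  obtain I where "((\<lambda>\<theta>. update_integrand (e \<theta>) (What \<theta>)) has_integral I) {0..t}"
    and "What t = pi_weights (e t) I"
    using conjunct2[OF solution[unfolded closed_loop_iff], rule_format, OF assms] by (elim exE conjE)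
  moreover have "integrator e What t = I"
    unfolding integrator_def using calculation(1) by (rule integral_unique)
  ultimately show "((\<lambda>\<theta>. update_integrand (e \<theta>) (What \<theta>)) has_integral integrator e What t) {0..t}"
    and "What t = pi_weights (e t) (integrator e What t)" by auto
qed

lemma closed_loop_continuous_on:
  shows "continuous_on {0..t} e" and "continuous_on {0..t} (integrator e What)"
proof -
  show "continuous_on {0..t} e"
    by (rule continuous_on_subset[OF continuous_on_vector_derivative[of "{0..}" e
          "\<lambda>t. error_field (e t) (What t) (\<eta> t)"]]) (use closed_loop_has_vector_derivative in auto)
  show "continuous_on {0..t} (integrator e What)"
  proof (cases "t \<ge> 0")
    case True
    then show ?thesis unfolding integrator_def
      by (rule indefinite_integral_continuous_1[OF has_integral_integrable[OF closed_loop_integrator(1)]])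
  qed simp
qed

lemma closed_loop_continuous_on_lyapunov:
  "continuous_on {0..t} (\<lambda>\<theta>. lyapunov (e \<theta>) (integrator e What \<theta>))"
  unfolding lyapunov_def
  by (intro continuous_on_add continuous_on_quadratic_form closed_loop_continuous_on continuous_on_diff
      continuous_on_const)

lemma closed_loop_error_part:
  assumes "0 \<le> s" "s \<le> t"
  shows "((\<lambda>\<theta>. 2 * ((P *v e \<theta>) \<bullet> error_field (e \<theta>) (What \<theta>) (\<eta> \<theta>)))
           has_integral (e t \<bullet> (P *v e t) - e s \<bullet> (P *v e s))) {s..t}"
proof (rule fundamental_theorem_of_calculus[OF \<open>s \<le> t\<close>])
  fix \<theta> assume "\<theta> \<in> {s..t}"
  then have "(e has_vector_derivative error_field (e \<theta>) (What \<theta>) (\<eta> \<theta>)) (at \<theta> within {s..t})"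
    using assms by (intro has_vector_derivative_within_subset[OF closed_loop_has_vector_derivative]) auto
  then show "((\<lambda>\<theta>. e \<theta> \<bullet> (P *v e \<theta>)) has_vector_derivative
      2 * ((P *v e \<theta>) \<bullet> error_field (e \<theta>) (What \<theta>) (\<eta> \<theta>))) (at \<theta> within {s..t})"
    by (rule has_vector_derivative_quadratic_form[OF _ sym_P])
qed

lemma closed_loop_integrator_part:
  assumes "0 \<le> s" "s \<le> t"
  defines "J \<equiv> \<lambda>\<theta>. integrator e What \<theta> - I_star"
  shows "((\<lambda>\<theta>. 2 * ((\<Gamma> *v J \<theta>) \<bullet> update_integrand (e \<theta>) (What \<theta>)))
           has_integral (J t \<bullet> (\<Gamma> *v J t) - J s \<bullet> (\<Gamma> *v J s))) {s..t}"
proof -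
  obtain L where L: "\<And>\<theta>. \<theta> \<in> {0..t} \<Longrightarrow>
      norm (update_integrand (e \<theta>) (pi_weights (e \<theta>) (integrator e What \<theta>))) \<le> L"
    using update_integrand_bounded[OF compact_Icc closed_loop_continuous_on] by blast
  have bound: "norm (update_integrand (e \<theta>) (What \<theta>)) \<le> L" if "\<theta> \<in> {s..t}" for \<theta>
    using L[of \<theta>] closed_loop_integrator(2)[of \<theta>] that assms(1) by simp
  have "((\<lambda>\<theta>. update_integrand (e \<theta>) (What \<theta>)) has_integral (J y - J 0)) {0..y}" if "y \<in> {0..t}" for y
    using closed_loop_integrator(1)[of y] that by (simp add: J_def integrator_def)
  then have increment: "((\<lambda>\<theta>. update_integrand (e \<theta>) (What \<theta>)) has_integral (J y - J s)) {s..y}"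
    if "y \<in> {s..t}" for y
    using indefinite_integral_increment[of 0 t _ J s y] that assms(1) by simp
  show ?thesis
    by (rule has_integral_quadratic_form_indefinite_integral[OF \<open>s \<le> t\<close> sym_\<Gamma> bound increment])
qed

lemma closed_loop_lyapunov_integral:
  assumes "0 \<le> s" "s \<le> t"
  shows "((\<lambda>\<theta>. lyapunov_rate (e \<theta>) (What \<theta>) (integrator e What \<theta>) (\<eta> \<theta>))
           has_integral (lyapunov (e t) (integrator e What t) - lyapunov (e s) (integrator e What s))) {s..t}"
  using has_integral_add[OF closed_loop_error_part[OF assms] closed_loop_integrator_part[OF assms]]
  by (simp add: lyapunov_rate_def lyapunov_def algebra_simps)

lemma closed_loop_lyapunov_ultimately_le:
  assumes "0 \<le> t0" and t: "t \<ge> t0 + lyapunov (e t0) (integrator e What t0)"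
    and "c > 0" and "M > 0" and "(C + 1) / c \<le> M"
    and rate: "\<And>e I \<eta>0. \<bar>\<eta>0\<bar> \<le> \<eta>star \<Longrightarrow> lyapunov_rate e (pi_weights e I) I \<eta>0 \<le> - c * lyapunov e I + C"
  shows "lyapunov (e t) (integrator e What t) \<le> M"
proof (rule integral_decrease_ultimately_le[of t0 "\<lambda>\<theta>. lyapunov (e \<theta>) (integrator e What \<theta>)"
      "\<lambda>\<theta>. lyapunov_rate (e \<theta>) (What \<theta>) (integrator e What \<theta>) (\<eta> \<theta>)" M t])
  show "continuous_on {t0..s} (\<lambda>\<theta>. lyapunov (e \<theta>) (integrator e What \<theta>))" for s
    by (rule continuous_on_subset[OF closed_loop_continuous_on_lyapunov[of s]]) (use \<open>0 \<le> t0\<close> in auto)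
  show "lyapunov (e x) (integrator e What x) \<ge> 0" for x by (rule lyapunov_nonneg)
  show "((\<lambda>\<theta>. lyapunov_rate (e \<theta>) (What \<theta>) (integrator e What \<theta>) (\<eta> \<theta>)) has_integral
      (lyapunov (e t') (integrator e What t') - lyapunov (e s) (integrator e What s))) {s..t'}"
    if "t0 \<le> s" "s \<le> t'" for s t'
    using closed_loop_lyapunov_integral[of s t'] that \<open>0 \<le> t0\<close> by simp
  show "lyapunov_rate (e x) (What x) (integrator e What x) (\<eta> x) \<le> -1"
    if "x \<ge> t0" "lyapunov (e x) (integrator e What x) \<ge> M" for x
  proof -
    have "x \<ge> 0" using that \<open>0 \<le> t0\<close> by simp
    then have "lyapunov_rate (e x) (What x) (integrator e What x) (\<eta> x)
        \<le> - c * lyapunov (e x) (integrator e What x) + C"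
      using rate[OF eta] closed_loop_integrator(2) by simp
    also have "\<dots> \<le> - c * M + C" using that(2) \<open>c > 0\<close> by simp
    also have "\<dots> \<le> -1" using \<open>(C + 1) / c \<le> M\<close> \<open>c > 0\<close> by (simp add: pos_divide_le_eq mult.commute)
    finally show ?thesis .
  qed
qed (use \<open>M > 0\<close> t in auto)

end

end

theorem theorem1:
  fixes A P Q :: "real^'n^'n" and B :: "real^'n"
    and \<beta> :: "real^'n \<Rightarrow> real^'m" and W :: "real^'m"
    and \<eta> :: "real \<Rightarrow> real" and \<eta>star :: real
    and \<Gamma> \<Sigma> K :: "real^'m^'m"
  assumes "hurwitz A"
    and "assumption1 \<beta>"
    and "pos_def P" and "pos_def Q"
    and "Q = - (transpose A ** P + P ** A)"
    and "sym_mat \<Gamma>" and "sym_mat \<Sigma>" and "sym_mat K"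
    and "pos_def \<Gamma>" and "pos_def \<Sigma>"
    and "pos_semidef K" and "pos_def (4 *\<^sub>R matrix_inv \<Sigma> - K)"
    and "\<forall>t\<ge>0. \<bar>\<eta> t\<bar> \<le> \<eta>star"
  shows "\<exists>b>0. \<forall>a>0. \<exists>T\<ge>0. \<forall>t0\<ge>0. \<forall>e What.
           closed_loop A B \<beta> W \<eta> P \<Gamma> \<Sigma> K e What \<longrightarrow>
           norm (e t0, What t0) \<le> a \<longrightarrow>
           (\<forall>t\<ge>t0 + T. norm (e t, What t) \<le> b)"
proof -
  interpret pi_adaptive_loop A P Q B \<beta> W \<eta> \<eta>star \<Gamma> \<Sigma> K
    using assms by unfold_locales auto
  obtain c C where "c > 0"
    and rate: "\<And>e I \<eta>0. \<bar>\<eta>0\<bar> \<le> \<eta>star \<Longrightarrow> lyapunov_rate e (pi_weights e I) I \<eta>0 \<le> - c * lyapunov e I + C"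
    using lyapunov_rate_le by blast
  define M where "M = max 1 ((C + 1) / c)"
  obtain b where "b > 0" and b: "\<And>e I. lyapunov e I \<le> M \<Longrightarrow> norm (e, pi_weights e I) \<le> b"
    using pi_weights_bounded_on_sublevel by blast
  have "\<exists>T\<ge>0. \<forall>t0\<ge>0. \<forall>e What. closed_loop A B \<beta> W \<eta> P \<Gamma> \<Sigma> K e What \<longrightarrow>
          norm (e t0, What t0) \<le> a \<longrightarrow> (\<forall>t\<ge>t0 + T. norm (e t, What t) \<le> b)" for a
  proof -
    obtain T where "T \<ge> 0" and T: "\<And>e I. norm (e, pi_weights e I) \<le> a \<Longrightarrow> lyapunov e I \<le> T"
      using lyapunov_bounded_on_ball by blast
    have "norm (e t, What t) \<le> b"
      if "t0 \<ge> 0" and sol: "closed_loop A B \<beta> W \<eta> P \<Gamma> \<Sigma> K e What"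
        and "norm (e t0, What t0) \<le> a" and "t \<ge> t0 + T" for t0 e What t
    proof -
      have "lyapunov (e t0) (integrator e What t0) \<le> T"
        using T closed_loop_integrator(2)[OF sol] that by simp
      then have "lyapunov (e t) (integrator e What t) \<le> M"
        using closed_loop_lyapunov_ultimately_le[OF sol \<open>t0 \<ge> 0\<close> _ \<open>c > 0\<close> _ _ rate] \<open>t \<ge> t0 + T\<close>
        by (simp add: M_def)
      then show ?thesis
        using b closed_loop_integrator(2)[OF sol] \<open>t0 \<ge> 0\<close> \<open>t \<ge> t0 + T\<close> \<open>T \<ge> 0\<close> by simp
    qed
    with \<open>T \<ge> 0\<close> show ?thesis by blast
  qed
  with \<open>b > 0\<close> show ?thesis by blast
qed

end
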